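(* For an $L$-layer LISTA network with Gaussian initialization $\mathbf W_0=(\mathbf W_{10},\mathbf W_{20})$ (i.i.d. $\mathcal N(0,1)$ entries) and any weights $\mathbf W_1,\mathbf W_2$ with $\|\mathbf W_1-\mathbf W_{10}\|\le R_1$, $\|\mathbf W_2-\mathbf W_{20}\|\le R_2$, we have for every $s\in[m]$ $$\|\mathbf b_s^l-\mathbf b^l_{s,0}\|=\tilde O(1/\sqrt m)\quad\forall\,l\in[L-1].$$
   Context: Fix $\lambda>0$ and $\sigma(x)=\log(1+e^{x-\lambda})-\log(1+e^{-x-\lambda})$ (componentwise), $L_\sigma$-Lipschitz and $\beta_\sigma$-smooth. LISTA: input $\mathbf y\in\mathbb R^n$ with $|y_i|\le C_y$, initial $\mathbf x^0$ with $|x^0_i|\le C_x$, $\mathbf x^l=\sigma\big(\frac1{\sqrt n}W_1^l\mathbf y+\frac1{\sqrt m}W_2^l\mathbf x^{l-1}\big)$, $W_1^l\in\mathbb R^{m\times n}$, $W_2^l\in\mathbb R^{m\times m}$, output $\mathbf f=\frac1{\sqrt m}\mathbf x^L$, $f_s$ its $s$-th entry. $\mathbf b^l_s=\partial f_s/\partial\mathbf x^l$ at weights $\mathbf W=(\mathbf W_1,\mathbf W_2)$, $\mathbf b^l_{s,0}$ the same at $\mathbf W_0$. Weight distances are Frobenius norms over all entries; $\|\cdot\|$ on vectors is Euclidean. $\tilde O$ is with respect to $m$ (suppressing logarithmic factors), holding with high probability over the initialization. *)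

theory Defs
  imports "HOL-Probability.Probability"
begin

text \<open>Soft-thresholding-like activation sigma (componentwise).\<close>
definition lista_sigma :: "real \<Rightarrow> real \<Rightarrow> real" where
  "lista_sigma lam x = ln (1 + exp (x - lam)) - ln (1 + exp (- x - lam))"

text \<open>Weights: W1 l i j (layer l, row i < m, column j < n), W2 l i j (row i < m, column j < m).
  Vectors are functions nat => real, only the first n resp. m entries matter.\<close>

definition lista_step ::
  "real \<Rightarrow> nat \<Rightarrow> nat \<Rightarrow> (nat \<Rightarrow> nat \<Rightarrow> nat \<Rightarrow> real) \<Rightarrow> (nat \<Rightarrow> nat \<Rightarrow> nat \<Rightarrow> real)
    \<Rightarrow> (nat \<Rightarrow> real) \<Rightarrow> nat \<Rightarrow> (nat \<Rightarrow> real) \<Rightarrow> (nat \<Rightarrow> real)" where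
  "lista_step lam n m W1 W2 y l x = (\<lambda>i. lista_sigma lam
      ((1 / sqrt (real n)) * (\<Sum>j<n. W1 l i j * y j) + (1 / sqrt (real m)) * (\<Sum>j<m. W2 l i j * x j)))"

fun lista_from ::
  "real \<Rightarrow> nat \<Rightarrow> nat \<Rightarrow> (nat \<Rightarrow> nat \<Rightarrow> nat \<Rightarrow> real) \<Rightarrow> (nat \<Rightarrow> nat \<Rightarrow> nat \<Rightarrow> real)
    \<Rightarrow> (nat \<Rightarrow> real) \<Rightarrow> nat \<Rightarrow> (nat \<Rightarrow> real) \<Rightarrow> nat \<Rightarrow> (nat \<Rightarrow> real)" where
  "lista_from lam n m W1 W2 y l x 0 = x"
| "lista_from lam n m W1 W2 y l x (Suc k) =
     lista_step lam n m W1 W2 y (l + Suc k) (lista_from lam n m W1 W2 y l x k)"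

definition lista_x where
  "lista_x lam n m W1 W2 y x0 l = lista_from lam n m W1 W2 y 0 x0 l"

definition lista_out_from where
  "lista_out_from lam n m L W1 W2 y l x s = (1 / sqrt (real m)) * lista_from lam n m W1 W2 y l x (L - l) s"

text \<open>b^l_s = partial f_s / partial x^l, evaluated at the actual x^l; entry j.\<close>
definition lista_b where
  "lista_b lam n m L W1 W2 y x0 l s j =
     (let xl = lista_x lam n m W1 W2 y x0 l in
      deriv (\<lambda>t. lista_out_from lam n m L W1 W2 y l (xl(j := t)) s) (xl j))"

text \<open>Index set of all initialization entries (True: W1-entries, False: W2-entries), layers 1..L.\<close>
definition init_index :: "nat \<Rightarrow> nat \<Rightarrow> nat \<Rightarrow> (bool \<times> nat \<times> nat \<times> nat) set" where
  "init_index L n m =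
     {(True, l, i, j) | l i j. l \<in> {1..L} \<and> i < m \<and> j < n} \<union>
     {(False, l, i, j) | l i j. l \<in> {1..L} \<and> i < m \<and> j < m}"

definition init_measure :: "nat \<Rightarrow> nat \<Rightarrow> nat \<Rightarrow> (bool \<times> nat \<times> nat \<times> nat \<Rightarrow> real) measure" where
  "init_measure L n m = PiM (init_index L n m) (\<lambda>_. density lborel std_normal_density)"

definition W1_of :: "(bool \<times> nat \<times> nat \<times> nat \<Rightarrow> real) \<Rightarrow> nat \<Rightarrow> nat \<Rightarrow> nat \<Rightarrow> real" where
  "W1_of g l i j = g (True, l, i, j)"
definition W2_of :: "(bool \<times> nat \<times> nat \<times> nat \<Rightarrow> real) \<Rightarrow> nat \<Rightarrow> nat \<Rightarrow> nat \<Rightarrow> real" where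
  "W2_of g l i j = g (False, l, i, j)"

definition dist_W1 :: "nat \<Rightarrow> nat \<Rightarrow> nat \<Rightarrow> (nat \<Rightarrow> nat \<Rightarrow> nat \<Rightarrow> real) \<Rightarrow> (nat \<Rightarrow> nat \<Rightarrow> nat \<Rightarrow> real) \<Rightarrow> real" where
  "dist_W1 L n m A B = sqrt (\<Sum>l\<in>{1..L}. \<Sum>i<m. \<Sum>j<n. (A l i j - B l i j)\<^sup>2)"
definition dist_W2 :: "nat \<Rightarrow> nat \<Rightarrow> (nat \<Rightarrow> nat \<Rightarrow> nat \<Rightarrow> real) \<Rightarrow> (nat \<Rightarrow> nat \<Rightarrow> nat \<Rightarrow> real) \<Rightarrow> real" where
  "dist_W2 L m A B = sqrt (\<Sum>l\<in>{1..L}. \<Sum>i<m. \<Sum>j<m. (A l i j - B l i j)\<^sup>2)"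

definition vec_dist :: "nat \<Rightarrow> (nat \<Rightarrow> real) \<Rightarrow> (nat \<Rightarrow> real) \<Rightarrow> real" where
  "vec_dist m u v = sqrt (\<Sum>j<m. (u j - v j)\<^sup>2)"

end

theory Submission
  imports Defs
begin

text \<open>The row \<open>b\<^sup>l\<^sub>s\<close> is \<open>e\<^sub>s\<^sup>T J / sqrt m\<close>, where \<open>J\<close> is the Jacobian of the layers \<open>l + 1, \<dots>, L\<close>,
  a product of the matrices \<open>diag (sigma' z) W\<^sub>2 / sqrt m\<close> with \<open>0 \<le> sigma' \<le> 1\<close>. Hence
  \<open>\<parallel>b\<parallel> \<le> (B / sqrt m)\<^bsup>L - l\<^esup> / sqrt m\<close> as soon as every \<open>W\<^sub>2\<close> layer has operator norm at most \<open>B\<close>.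
  For the Gaussian initialization, a net of the unit ball with \<open>(8 m + 3)\<^sup>m\<close> points and a Chernoff
  bound for each bilinear form \<open>u\<^sup>T W v\<close> over pairs of net points give operator norm
  \<open>O (sqrt (m ln m))\<close> in every layer outside an event of probability \<open>L e\<^sup>-\<^sup>m\<close>; a perturbation of
  Frobenius size \<open>R\<^sub>2\<close> adds at most \<open>R\<^sub>2\<close>. So \<open>B / sqrt m = O (ln m)\<close>, and the rows at \<open>W\<close> and at
  \<open>W\<^sub>0\<close>, hence also their difference, have norm \<open>O ((ln m)\<^sup>L / sqrt m)\<close>.\<close>

section \<open>Derivatives of the network\<close>

definition lista_sigma_deriv :: "real \<Rightarrow> real \<Rightarrow> real" where
  "lista_sigma_deriv lam x =
     exp (x - lam) / (1 + exp (x - lam)) + exp (- x - lam) / (1 + exp (- x - lam))"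

lemma lista_sigma_has_real_derivative:
  "(lista_sigma lam has_real_derivative lista_sigma_deriv lam x) (at x)"
proof -
  have "((\<lambda>x. ln (1 + exp (x - lam)) - ln (1 + exp (- x - lam))) has_real_derivative
     1 / (1 + exp (x - lam)) * (exp (x - lam) * (1 - 0))
       - 1 / (1 + exp (- x - lam)) * (exp (- x - lam) * (- 1 - 0))) (at x)"
    by (rule derivative_eq_intros refl | simp add: add_pos_pos)+
  then show ?thesis
    unfolding lista_sigma_def[abs_def] lista_sigma_deriv_def by simp
qed

lemma lista_sigma_deriv_nonneg: "0 \<le> lista_sigma_deriv lam x"
  unfolding lista_sigma_deriv_def by (simp add: add_nonneg_nonneg)

lemma lista_sigma_deriv_le_1:
  assumes "lam \<ge> 0"
  shows "lista_sigma_deriv lam x \<le> 1"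
proof -
  define a b where "a = exp (x - lam)" and "b = exp (- x - lam)"
  have a: "a > 0" and b: "b > 0" unfolding a_def b_def by auto
  have "a * b = exp (- 2 * lam)" unfolding a_def b_def by (simp flip: exp_add)
  also have "\<dots> \<le> 1" using assms by simp
  finally have "a + b + 2 * a * b \<le> (1 + a) * (1 + b)" by (simp add: algebra_simps)
  moreover have "a / (1 + a) + b / (1 + b) = (a + b + 2 * a * b) / ((1 + a) * (1 + b))"
    using a b by (simp add: field_simps)
  ultimately have "a / (1 + a) + b / (1 + b) \<le> 1"
    using a b by simp
  then show ?thesis unfolding lista_sigma_deriv_def a_def b_def .
qed

definition mat_vec :: "nat \<Rightarrow> (nat \<Rightarrow> nat \<Rightarrow> real) \<Rightarrow> (nat \<Rightarrow> real) \<Rightarrow> nat \<Rightarrow> real" where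
  "mat_vec k W v i = (\<Sum>j<k. W i j * v j)"

definition lista_preact ::
  "nat \<Rightarrow> nat \<Rightarrow> (nat \<Rightarrow> nat \<Rightarrow> nat \<Rightarrow> real) \<Rightarrow> (nat \<Rightarrow> nat \<Rightarrow> nat \<Rightarrow> real)
    \<Rightarrow> (nat \<Rightarrow> real) \<Rightarrow> nat \<Rightarrow> (nat \<Rightarrow> real) \<Rightarrow> nat \<Rightarrow> real" where
  "lista_preact n m W1 W2 y l x i =
     1 / sqrt (real n) * mat_vec n (W1 l) y i + 1 / sqrt (real m) * mat_vec m (W2 l) x i"

lemma lista_step_eq_preact:
  "lista_step lam n m W1 W2 y l x i = lista_sigma lam (lista_preact n m W1 W2 y l x i)"
  unfolding lista_step_def lista_preact_def mat_vec_def by simp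

text \<open>Jacobian-vector product of the layers \<open>l + 1, \<dots>, l + k\<close> at the state \<open>x\<close>.\<close>
fun lista_jvp ::
  "real \<Rightarrow> nat \<Rightarrow> nat \<Rightarrow> (nat \<Rightarrow> nat \<Rightarrow> nat \<Rightarrow> real) \<Rightarrow> (nat \<Rightarrow> nat \<Rightarrow> nat \<Rightarrow> real)
    \<Rightarrow> (nat \<Rightarrow> real) \<Rightarrow> nat \<Rightarrow> (nat \<Rightarrow> real) \<Rightarrow> nat \<Rightarrow> (nat \<Rightarrow> real) \<Rightarrow> (nat \<Rightarrow> real)" where
  "lista_jvp lam n m W1 W2 y l x 0 v = v"
| "lista_jvp lam n m W1 W2 y l x (Suc k) v = (\<lambda>i.
     lista_sigma_deriv lam (lista_preact n m W1 W2 y (l + Suc k) (lista_from lam n m W1 W2 y l x k) i)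
       * (1 / sqrt (real m) * mat_vec m (W2 (l + Suc k)) (lista_jvp lam n m W1 W2 y l x k v) i))"

lemma lista_from_has_real_derivative:
  "((\<lambda>t. lista_from lam n m W1 W2 y l (x(j := t)) k i) has_real_derivative
     lista_jvp lam n m W1 W2 y l x k (\<lambda>i. if i = j then 1 else 0) i) (at (x j))"
proof (induction k arbitrary: i)
  case 0
  then show ?case by (cases "i = j") auto
next
  case (Suc k)
  let ?x = "\<lambda>t. lista_from lam n m W1 W2 y l (x(j := t)) k"
  let ?e = "\<lambda>i. if i = j then 1 else 0"
  have "((\<lambda>t. mat_vec m (W2 (l + Suc k)) (?x t) i) has_real_derivative
      mat_vec m (W2 (l + Suc k)) (lista_jvp lam n m W1 W2 y l x k ?e) i) (at (x j))"
    unfolding mat_vec_def by (intro DERIV_sum DERIV_cmult Suc.IH)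
  then have "((\<lambda>t. lista_preact n m W1 W2 y (l + Suc k) (?x t) i) has_real_derivative
      0 + 1 / sqrt (real m) * mat_vec m (W2 (l + Suc k)) (lista_jvp lam n m W1 W2 y l x k ?e) i)
      (at (x j))"
    unfolding lista_preact_def by (intro DERIV_add DERIV_const DERIV_cmult)
  from DERIV_chain'[OF this lista_sigma_has_real_derivative] show ?case
    by (simp only: lista_from.simps lista_jvp.simps lista_step_eq_preact fun_upd_triv add_0_left)
qed

lemma lista_b_eq_jvp:
  "lista_b lam n m L W1 W2 y x0 l s j = 1 / sqrt (real m) *
     lista_jvp lam n m W1 W2 y l (lista_x lam n m W1 W2 y x0 l) (L - l) (\<lambda>i. if i = j then 1 else 0) s"
  unfolding lista_b_def Let_def lista_out_from_def
  by (intro DERIV_imp_deriv DERIV_cmult lista_from_has_real_derivative)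

lemma lista_jvp_linear:
  "(\<Sum>j<m. c j * lista_jvp lam n m W1 W2 y l x k (\<lambda>i. if i = j then 1 else 0) i)
    = lista_jvp lam n m W1 W2 y l x k (\<lambda>j. if j < m then c j else 0) i"
proof (induction k arbitrary: i)
  case 0
  then show ?case by (auto simp: if_distrib cong: if_cong)
next
  case (Suc k)
  let ?J = "lista_jvp lam n m W1 W2 y l x k"
  have "(\<Sum>j<m. c j * mat_vec m (W2 (l + Suc k)) (?J (\<lambda>i. if i = j then 1 else 0)) i)
      = mat_vec m (W2 (l + Suc k)) (\<lambda>i'. \<Sum>j<m. c j * ?J (\<lambda>i. if i = j then 1 else 0) i') i"
    unfolding mat_vec_def sum_distrib_left by (subst sum.swap) (simp add: mult_ac)
  moreover have "(\<Sum>j<m. c j * (a * (b * M j))) = a * (b * (\<Sum>j<m. c j * M j))" for a b M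
    by (simp add: sum_distrib_left mult_ac)
  ultimately show ?case
    by (simp only: lista_jvp.simps Suc.IH)
qed

section \<open>Operator norms and the size of the Jacobian rows\<close>

definition op_norm_le :: "nat \<Rightarrow> (nat \<Rightarrow> nat \<Rightarrow> real) \<Rightarrow> real \<Rightarrow> bool" where
  "op_norm_le m W B \<longleftrightarrow> (\<forall>v. L2_set (mat_vec m W v) {..<m} \<le> B * L2_set v {..<m})"

definition frobenius_norm :: "nat \<Rightarrow> (nat \<Rightarrow> nat \<Rightarrow> real) \<Rightarrow> real" where
  "frobenius_norm m W = sqrt (\<Sum>i<m. \<Sum>j<m. (W i j)\<^sup>2)"

lemma L2_set_abs: "L2_set (\<lambda>i. \<bar>f i\<bar>) A = L2_set f A"
  unfolding L2_set_def by simp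

lemma abs_le_L2_set: "finite A \<Longrightarrow> i \<in> A \<Longrightarrow> \<bar>f i\<bar> \<le> L2_set f A"
  using member_le_L2_set[of A i "\<lambda>i. \<bar>f i\<bar>"] by (simp add: L2_set_abs)

lemma L2_set_mat_vec_le_frobenius:
  "L2_set (mat_vec m W v) {..<m} \<le> frobenius_norm m W * L2_set v {..<m}"
proof -
  have row: "\<bar>mat_vec m W v i\<bar> \<le> L2_set (W i) {..<m} * L2_set v {..<m}" for i
    unfolding mat_vec_def
    by (rule order_trans[OF sum_abs]) (simp add: abs_mult L2_set_mult_ineq)
  have "L2_set (mat_vec m W v) {..<m} \<le> L2_set (\<lambda>i. L2_set (W i) {..<m} * L2_set v {..<m}) {..<m}"
    by (subst L2_set_abs[symmetric]) (rule L2_set_mono, use row in auto)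
  also have "\<dots> = L2_set (\<lambda>i. L2_set (W i) {..<m}) {..<m} * L2_set v {..<m}"
    by (simp add: L2_set_left_distrib)
  also have "L2_set (\<lambda>i. L2_set (W i) {..<m}) {..<m} = frobenius_norm m W"
    unfolding L2_set_def frobenius_norm_def by (simp add: sum_nonneg)
  finally show ?thesis .
qed

lemma op_norm_le_mono: "op_norm_le m W B \<Longrightarrow> B \<le> B' \<Longrightarrow> op_norm_le m W B'"
  unfolding op_norm_le_def by (meson L2_set_nonneg mult_right_mono order_trans)

lemma op_norm_le_perturb:
  assumes "op_norm_le m G B" and "frobenius_norm m (\<lambda>i j. W i j - G i j) \<le> R"
  shows "op_norm_le m W (B + R)"
  unfolding op_norm_le_def
proof
  fix v
  let ?D = "\<lambda>i j. W i j - G i j"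
  have "mat_vec m W v = (\<lambda>i. mat_vec m G v i + mat_vec m ?D v i)"
    unfolding mat_vec_def by (auto simp: algebra_simps sum.distrib[symmetric])
  then have "L2_set (mat_vec m W v) {..<m}
      \<le> L2_set (mat_vec m G v) {..<m} + L2_set (mat_vec m ?D v) {..<m}"
    by (simp add: L2_set_triangle_ineq)
  also have "\<dots> \<le> B * L2_set v {..<m} + R * L2_set v {..<m}"
    using assms(1) order_trans[OF L2_set_mat_vec_le_frobenius mult_right_mono[OF assms(2) L2_set_nonneg]]
    by (intro add_mono) (auto simp: op_norm_le_def)
  finally show "L2_set (mat_vec m W v) {..<m} \<le> (B + R) * L2_set v {..<m}"
    by (simp add: algebra_simps)
qed

lemma L2_set_lista_jvp_le:
  assumes "lam \<ge> 0" and "B \<ge> 0"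
    and op: "\<And>k'. k' \<in> {l+1..l+k} \<Longrightarrow> op_norm_le m (W2 k') B"
  shows "L2_set (lista_jvp lam n m W1 W2 y l x k v) {..<m} \<le> (B / sqrt (real m)) ^ k * L2_set v {..<m}"
  using op
proof (induction k)
  case 0
  then show ?case by simp
next
  case (Suc k)
  let ?u = "lista_jvp lam n m W1 W2 y l x k v"
  let ?W = "W2 (l + Suc k)"
  have "L2_set (lista_jvp lam n m W1 W2 y l x (Suc k) v) {..<m}
      \<le> L2_set (\<lambda>i. 1 / sqrt (real m) * \<bar>mat_vec m ?W ?u i\<bar>) {..<m}"
    unfolding L2_set_abs[symmetric, of "lista_jvp lam n m W1 W2 y l x (Suc k) v"]
    using lista_sigma_deriv_nonneg lista_sigma_deriv_le_1[OF \<open>lam \<ge> 0\<close>]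
    by (intro L2_set_mono) (auto simp: abs_mult intro!: divide_right_mono mult_left_le_one_le)
  also have "\<dots> = 1 / sqrt (real m) * L2_set (mat_vec m ?W ?u) {..<m}"
    by (subst L2_set_right_distrib[symmetric]) (auto simp: L2_set_abs)
  also have "\<dots> \<le> 1 / sqrt (real m) * (B * ((B / sqrt (real m)) ^ k * L2_set v {..<m}))"
  proof (intro mult_left_mono)
    have "op_norm_le m ?W B" and IH: "L2_set ?u {..<m} \<le> (B / sqrt (real m)) ^ k * L2_set v {..<m}"
      using Suc by auto
    then show "L2_set (mat_vec m ?W ?u) {..<m} \<le> B * ((B / sqrt (real m)) ^ k * L2_set v {..<m})"
      unfolding op_norm_le_def using \<open>B \<ge> 0\<close> by (meson mult_left_mono order_trans)
  qed simp
  finally show ?case by (simp add: mult_ac)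
qed

text \<open>The row \<open>b\<close> of the Jacobian satisfies \<open>\<parallel>b\<parallel>\<^sup>2 = (J b)\<^sub>s / sqrt m \<le> \<parallel>J\<parallel> \<parallel>b\<parallel> / sqrt m\<close>.\<close>
lemma L2_set_lista_b_le:
  assumes "lam \<ge> 0" and "B \<ge> 0" and "s < m" and "l \<le> L"
    and op: "\<And>k. k \<in> {l+1..L} \<Longrightarrow> op_norm_le m (W2 k) B"
  shows "L2_set (lista_b lam n m L W1 W2 y x0 l s) {..<m} \<le> (B / sqrt (real m)) ^ (L - l) / sqrt (real m)"
proof -
  let ?b = "lista_b lam n m L W1 W2 y x0 l s"
  let ?J = "lista_jvp lam n m W1 W2 y l (lista_x lam n m W1 W2 y x0 l) (L - l)"
  let ?b' = "\<lambda>j. if j < m then ?b j else 0"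
  let ?P = "(B / sqrt (real m)) ^ (L - l)"
  have "(L2_set ?b {..<m})\<^sup>2 = (\<Sum>j<m. ?b j * ?b j)"
    unfolding L2_set_def by (simp add: sum_nonneg power2_eq_square)
  also have "\<dots> = (\<Sum>j<m. ?b j * (1 / sqrt (real m) * ?J (\<lambda>i. if i = j then 1 else 0) s))"
    by (intro sum.cong refl arg_cong[where f = "(*) _"] lista_b_eq_jvp)
  also have "\<dots> = 1 / sqrt (real m) * ?J ?b' s"
    by (simp add: lista_jvp_linear[symmetric] sum_distrib_left mult_ac)
  also have "\<dots> \<le> 1 / sqrt (real m) * L2_set (?J ?b') {..<m}"
    using \<open>s < m\<close> by (intro mult_left_mono order_trans[OF abs_ge_self abs_le_L2_set]) auto
  also have "\<dots> \<le> 1 / sqrt (real m) * (?P * L2_set ?b' {..<m})"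
    using assms by (intro mult_left_mono L2_set_lista_jvp_le) auto
  also have "L2_set ?b' {..<m} = L2_set ?b {..<m}"
    by (rule L2_set_cong) auto
  finally have sq: "L2_set ?b {..<m} * L2_set ?b {..<m} \<le> ?P / sqrt (real m) * L2_set ?b {..<m}"
    by (simp add: power2_eq_square)
  show ?thesis
  proof (cases "L2_set ?b {..<m} = 0")
    case False
    show ?thesis
      by (rule mult_right_le_imp_le[OF sq]) (use False L2_set_nonneg[of ?b "{..<m}"] in linarith)
  qed (use \<open>B \<ge> 0\<close> in simp)
qed

lemma vec_dist_le_L2_set_add: "vec_dist m u v \<le> L2_set u {..<m} + L2_set v {..<m}"
proof -
  have "vec_dist m u v = L2_set (\<lambda>j. u j + - v j) {..<m}"
    unfolding vec_dist_def L2_set_def by simp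
  also have "\<dots> \<le> L2_set u {..<m} + L2_set (\<lambda>j. - v j) {..<m}"
    by (rule L2_set_triangle_ineq)
  finally show ?thesis unfolding L2_set_def by simp
qed

section \<open>Operator norms from a net\<close>

definition bilinear_form :: "nat \<Rightarrow> (nat \<Rightarrow> nat \<Rightarrow> real) \<Rightarrow> (nat \<Rightarrow> real) \<Rightarrow> (nat \<Rightarrow> real) \<Rightarrow> real" where
  "bilinear_form m G u v = (\<Sum>i<m. u i * mat_vec m G v i)"

lemma bilinear_form_diff_left:
  "bilinear_form m G (\<lambda>i. u i - w i) v = bilinear_form m G u v - bilinear_form m G w v"
  unfolding bilinear_form_def by (simp add: algebra_simps sum_subtractf)

lemma bilinear_form_diff_right:
  "bilinear_form m G u (\<lambda>i. v i - w i) = bilinear_form m G u v - bilinear_form m G u w"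
  unfolding bilinear_form_def mat_vec_def by (simp add: algebra_simps sum_subtractf)

lemma bilinear_form_scale:
  "bilinear_form m G (\<lambda>i. a * u i) (\<lambda>i. b * v i) = a * b * bilinear_form m G u v"
  unfolding bilinear_form_def mat_vec_def by (simp add: sum_distrib_left mult_ac)

lemma bilinear_form_le_frobenius:
  "bilinear_form m G u v \<le> frobenius_norm m G * L2_set u {..<m} * L2_set v {..<m}"
proof -
  have "bilinear_form m G u v \<le> (\<Sum>i<m. \<bar>u i\<bar> * \<bar>mat_vec m G v i\<bar>)"
    unfolding bilinear_form_def by (rule sum_mono) (simp flip: abs_mult)
  also have "\<dots> \<le> L2_set u {..<m} * L2_set (mat_vec m G v) {..<m}"
    by (rule L2_set_mult_ineq)
  also have "\<dots> \<le> L2_set u {..<m} * (frobenius_norm m G * L2_set v {..<m})"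
    by (intro mult_left_mono L2_set_mat_vec_le_frobenius L2_set_nonneg)
  finally show ?thesis by (simp add: mult_ac)
qed

lemma bilinear_form_le_of_unit_ball:
  assumes "\<And>u v. L2_set u {..<m} \<le> 1 \<Longrightarrow> L2_set v {..<m} \<le> 1 \<Longrightarrow> bilinear_form m G u v \<le> S"
  shows "bilinear_form m G u v \<le> S * L2_set u {..<m} * L2_set v {..<m}"
proof (cases "L2_set u {..<m} = 0 \<or> L2_set v {..<m} = 0")
  case True
  then have "bilinear_form m G u v = 0"
    unfolding bilinear_form_def mat_vec_def by (auto simp: L2_set_eq_0_iff intro!: sum.neutral)
  with True show ?thesis by auto
next
  case False
  let ?a = "L2_set u {..<m}" and ?b = "L2_set v {..<m}"
  have pos: "?a > 0" "?b > 0"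
    using False L2_set_nonneg[of u "{..<m}"] L2_set_nonneg[of v "{..<m}"] by linarith+
  have "L2_set (\<lambda>i. 1 / ?a * u i) {..<m} = 1" "L2_set (\<lambda>i. 1 / ?b * v i) {..<m} = 1"
    using pos by (subst L2_set_right_distrib[symmetric], simp, simp)+
  then have "bilinear_form m G (\<lambda>i. 1 / ?a * u i) (\<lambda>i. 1 / ?b * v i) \<le> S"
    by (intro assms) simp_all
  with pos show ?thesis
    unfolding bilinear_form_scale by (simp add: field_simps)
qed

lemma op_norm_le_of_bilinear_form_le:
  assumes "S \<ge> 0"
    and bil: "\<And>u v. bilinear_form m G u v \<le> S * L2_set u {..<m} * L2_set v {..<m}"
  shows "op_norm_le m G S"
  unfolding op_norm_le_def
proof
  fix v
  let ?t = "L2_set (mat_vec m G v) {..<m}"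
  have "?t * ?t = bilinear_form m G (mat_vec m G v) v"
    unfolding bilinear_form_def L2_set_def by (simp add: sum_nonneg power2_eq_square)
  also have "\<dots> \<le> (S * L2_set v {..<m}) * ?t"
    using bil[of "mat_vec m G v" v] by (simp add: mult_ac)
  finally have sq: "?t * ?t \<le> (S * L2_set v {..<m}) * ?t" .
  show "?t \<le> S * L2_set v {..<m}"
  proof (cases "?t = 0")
    case False
    show ?thesis
      by (rule mult_right_le_imp_le[OF sq]) (use False L2_set_nonneg[of "mat_vec m G v" "{..<m}"] in linarith)
  qed (use \<open>S \<ge> 0\<close> in simp)
qed

definition net_spacing :: "nat \<Rightarrow> real" where
  "net_spacing m = 1 / (4 * sqrt (real m))"

definition net_grid :: "nat \<Rightarrow> (nat \<Rightarrow> real) set" where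
  "net_grid m = PiE {..<m}
     (\<lambda>_. (\<lambda>k. real_of_int k * net_spacing m) ` {-(4 * int m + 1)..4 * int m + 1})"

definition net_round :: "nat \<Rightarrow> (nat \<Rightarrow> real) \<Rightarrow> (nat \<Rightarrow> real)" where
  "net_round m v = restrict (\<lambda>j. real_of_int \<lfloor>v j / net_spacing m\<rfloor> * net_spacing m) {..<m}"

lemma finite_net_grid: "finite (net_grid m)"
  unfolding net_grid_def by (intro finite_PiE) auto

lemma card_net_grid_le: "card (net_grid m) \<le> (8 * m + 3) ^ m"
proof -
  have "card (net_grid m) \<le> (\<Prod>i<m. card {-(4 * int m + 1)..4 * int m + 1})"
    unfolding net_grid_def card_PiE[OF finite_lessThan] by (intro prod_mono conjI card_image_le) auto
  then show ?thesis by (simp add: nat_add_distrib nat_mult_distrib add.commute)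
qed

lemma net_round_in_grid:
  assumes "m > 0" and "L2_set v {..<m} \<le> 1"
  shows "net_round m v \<in> net_grid m"
  unfolding net_grid_def net_round_def
proof (rule PiE_I)
  fix j assume "j \<in> {..<m}"
  then have "\<bar>v j\<bar> \<le> 1"
    using abs_le_L2_set[of "{..<m}" j v] assms(2) by simp
  moreover have "sqrt (real m) \<le> real m"
    using assms(1) by (simp add: real_sqrt_le_iff' power2_eq_square le_square)
  ultimately have "\<bar>v j / net_spacing m\<bar> \<le> 4 * real m"
    using mult_right_mono[OF \<open>\<bar>v j\<bar> \<le> 1\<close>, of "sqrt (real m)"]
    by (simp add: net_spacing_def abs_mult)
  then have "\<lfloor>v j / net_spacing m\<rfloor> \<in> {-(4 * int m + 1)..4 * int m + 1}"
    unfolding atLeastAtMost_iff by linarith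
  with \<open>j \<in> {..<m}\<close> show "restrict (\<lambda>j. real_of_int \<lfloor>v j / net_spacing m\<rfloor> * net_spacing m) {..<m} j
      \<in> (\<lambda>k. real_of_int k * net_spacing m) ` {-(4 * int m + 1)..4 * int m + 1}"
    by (simp only: restrict_apply') (rule imageI)
qed auto

lemma L2_set_net_round_error:
  assumes "m > 0"
  shows "L2_set (\<lambda>j. v j - net_round m v j) {..<m} \<le> 1 / 4"
proof -
  have h: "net_spacing m > 0" using assms unfolding net_spacing_def by simp
  have "0 \<le> v j - net_round m v j \<and> v j - net_round m v j \<le> net_spacing m" if "j < m" for j
  proof -
    have "real_of_int \<lfloor>v j / net_spacing m\<rfloor> * net_spacing m \<le> v j"
      using h of_int_floor_le pos_le_divide_eq by blast
    moreover have "v j < (real_of_int \<lfloor>v j / net_spacing m\<rfloor> + 1) * net_spacing m"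
      using h real_of_int_floor_add_one_gt pos_divide_less_eq by blast
    ultimately show ?thesis
      using that by (simp add: net_round_def algebra_simps)
  qed
  then have "L2_set (\<lambda>j. v j - net_round m v j) {..<m} \<le> L2_set (\<lambda>j. net_spacing m) {..<m}"
    by (intro L2_set_mono) auto
  also have "\<dots> = 1 / 4"
    using h assms by (simp add: L2_set_constant net_spacing_def)
  finally show ?thesis .
qed

lemma L2_set_net_round_le:
  assumes "m > 0" and "L2_set v {..<m} \<le> 1"
  shows "L2_set (net_round m v) {..<m} \<le> 5 / 4"
proof -
  have "L2_set (net_round m v) {..<m} = L2_set (\<lambda>j. v j + - (v j - net_round m v j)) {..<m}"
    by simp
  also have "\<dots> \<le> L2_set v {..<m} + L2_set (\<lambda>j. - (v j - net_round m v j)) {..<m}"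
    by (rule L2_set_triangle_ineq)
  also have "L2_set (\<lambda>j. - (v j - net_round m v j)) {..<m} = L2_set (\<lambda>j. v j - net_round m v j) {..<m}"
    unfolding L2_set_def by (simp add: power2_commute)
  finally show ?thesis
    using L2_set_net_round_error[OF assms(1), of v] assms(2) by simp
qed

lemma mult3_mono_nonneg:
  fixes t a b A B :: real
  assumes "0 \<le> t" "0 \<le> a" "0 \<le> b" "a \<le> A" "b \<le> B"
  shows "t * a * b \<le> t * A * B"
  using assms by (intro mult_mono mult_left_mono) auto

text \<open>With \<open>S\<close> the supremum of the form on the unit balls, rounding both arguments to the net gives
  \<open>S \<le> (5/4)\<^sup>2 \<tau> + (1/4 + 5/16) S\<close>.\<close>
lemma op_norm_le_of_net:
  assumes "m > 0" and "\<tau> \<ge> 0"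
    and net: "\<And>u v. u \<in> net_grid m \<Longrightarrow> v \<in> net_grid m \<Longrightarrow>
      bilinear_form m G u v \<le> \<tau> * L2_set u {..<m} * L2_set v {..<m}"
  shows "op_norm_le m G (4 * \<tau>)"
proof -
  define V where "V = {bilinear_form m G u v | u v. L2_set u {..<m} \<le> 1 \<and> L2_set v {..<m} \<le> 1}"
  define S where "S = Sup V"
  have "bdd_above V"
  proof (rule bdd_aboveI)
    fix x assume "x \<in> V"
    then obtain u v where "x = bilinear_form m G u v" "L2_set u {..<m} \<le> 1" "L2_set v {..<m} \<le> 1"
      unfolding V_def by auto
    moreover have "frobenius_norm m G \<ge> 0"
      unfolding frobenius_norm_def by (simp add: sum_nonneg)
    ultimately show "x \<le> frobenius_norm m G * 1 * 1"
      using order_trans[OF bilinear_form_le_frobenius mult3_mono_nonneg[OF _ L2_set_nonneg L2_set_nonneg]]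
      by blast
  qed
  then have unit: "bilinear_form m G u v \<le> S"
    if "L2_set u {..<m} \<le> 1" "L2_set v {..<m} \<le> 1" for u v
    unfolding S_def by (rule cSup_upper[rotated]) (use that in \<open>auto simp: V_def\<close>)
  have S0: "S \<ge> 0"
    using unit[of "\<lambda>_. 0" "\<lambda>_. 0"] by (simp add: bilinear_form_def L2_set_def)
  have hom: "bilinear_form m G u v \<le> S * L2_set u {..<m} * L2_set v {..<m}" for u v
    by (rule bilinear_form_le_of_unit_ball[OF unit])
  have "x \<le> 25 / 16 * \<tau> + 9 / 16 * S" if "x \<in> V" for x
  proof -
    obtain u v where x: "x = bilinear_form m G u v" and u: "L2_set u {..<m} \<le> 1" and v: "L2_set v {..<m} \<le> 1"
      using \<open>x \<in> V\<close> unfolding V_def by blast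
    let ?u = "net_round m u" and ?v = "net_round m v"
    have "x = bilinear_form m G ?u ?v + bilinear_form m G (\<lambda>i. u i - ?u i) v
        + bilinear_form m G ?u (\<lambda>i. v i - ?v i)"
      unfolding x by (simp add: bilinear_form_diff_left bilinear_form_diff_right)
    moreover have "bilinear_form m G ?u ?v \<le> \<tau> * (5/4) * (5/4)"
      using order_trans[OF net[OF net_round_in_grid net_round_in_grid]
          mult3_mono_nonneg[OF \<open>\<tau> \<ge> 0\<close> L2_set_nonneg L2_set_nonneg L2_set_net_round_le L2_set_net_round_le]]
        \<open>m > 0\<close> u v
      by blast
    moreover have "bilinear_form m G (\<lambda>i. u i - ?u i) v \<le> S * (1/4) * 1"
      using order_trans[OF hom mult3_mono_nonneg[OF S0 L2_set_nonneg L2_set_nonneg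
          L2_set_net_round_error[OF \<open>m > 0\<close>] v]]
      by blast
    moreover have "bilinear_form m G ?u (\<lambda>i. v i - ?v i) \<le> S * (5/4) * (1/4)"
      using order_trans[OF hom mult3_mono_nonneg[OF S0 L2_set_nonneg L2_set_nonneg
          L2_set_net_round_le[OF \<open>m > 0\<close> u] L2_set_net_round_error[OF \<open>m > 0\<close>]]]
      by blast
    ultimately show ?thesis by linarith
  qed
  moreover have "V \<noteq> {}"
    unfolding V_def by (auto simp: L2_set_def intro!: exI[of _ "\<lambda>_. 0"])
  ultimately have "S \<le> 25 / 16 * \<tau> + 9 / 16 * S"
    unfolding S_def by (intro cSup_least)
  then have "S \<le> 4 * \<tau>" using \<open>\<tau> \<ge> 0\<close> by linarith
  show ?thesis
  proof (rule op_norm_le_of_bilinear_form_le)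
    fix u v
    show "bilinear_form m G u v \<le> 4 * \<tau> * L2_set u {..<m} * L2_set v {..<m}"
      using order_trans[OF hom mult_right_mono[OF mult_right_mono[OF \<open>S \<le> 4 * \<tau>\<close>]]]
      by (simp add: L2_set_nonneg)
  qed (use \<open>\<tau> \<ge> 0\<close> in simp)
qed

section \<open>Gaussian tails\<close>

abbreviation std_normal :: "real measure" where
  "std_normal \<equiv> density lborel std_normal_density"

lemma std_normal_mgf: "(\<integral>\<^sup>+ y. ennreal (exp (c * y)) \<partial>std_normal) = ennreal (exp (c\<^sup>2 / 2))"
proof -
  have shift: "std_normal_density y * exp (c * y) = exp (c\<^sup>2 / 2) * normal_density c 1 y" for y
  proof -
    have "- y\<^sup>2 / 2 + c * y = c\<^sup>2 / 2 + - (y - c)\<^sup>2 / 2"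
      by (simp add: power2_eq_square field_simps)
    then show ?thesis unfolding normal_density_def by (simp add: exp_add[symmetric] mult_ac)
  qed
  have "(\<integral>\<^sup>+ y. ennreal (exp (c * y)) \<partial>std_normal)
      = (\<integral>\<^sup>+ y. ennreal (std_normal_density y) * ennreal (exp (c * y)) \<partial>lborel)"
    by (rule nn_integral_density) auto
  also have "\<dots> = (\<integral>\<^sup>+ y. ennreal (exp (c\<^sup>2 / 2)) * ennreal (normal_density c 1 y) \<partial>lborel)"
    by (simp add: ennreal_mult'[symmetric] shift)
  also have "\<dots> = ennreal (exp (c\<^sup>2 / 2)) * (\<integral>\<^sup>+ y. ennreal (normal_density c 1 y) \<partial>lborel)"
    by (rule nn_integral_cmult) auto
  also have "(\<integral>\<^sup>+ y. ennreal (normal_density c 1 y) \<partial>lborel) = 1"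
    by (subst nn_integral_eq_integral) auto
  finally show ?thesis by simp
qed

lemma prob_space_PiM_std_normal: "prob_space (PiM I (\<lambda>_. std_normal))"
  by (intro prob_space_PiM prob_space_normal_density) simp

lemma PiM_std_normal_mgf:
  assumes "finite I"
  shows "(\<integral>\<^sup>+ g. ennreal (exp (\<Sum>x\<in>I. a x * g x)) \<partial>PiM I (\<lambda>_. std_normal))
    = ennreal (exp ((\<Sum>x\<in>I. (a x)\<^sup>2) / 2))"
proof -
  interpret product_sigma_finite "\<lambda>_. std_normal"
    unfolding product_sigma_finite_def
    using prob_space_imp_sigma_finite[OF prob_space_normal_density] by simp
  have "(\<integral>\<^sup>+ g. ennreal (exp (\<Sum>x\<in>I. a x * g x)) \<partial>PiM I (\<lambda>_. std_normal))
      = (\<integral>\<^sup>+ g. (\<Prod>x\<in>I. ennreal (exp (a x * g x))) \<partial>PiM I (\<lambda>_. std_normal))"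
    using assms by (intro nn_integral_cong) (simp add: exp_sum prod_ennreal)
  also have "\<dots> = (\<Prod>x\<in>I. \<integral>\<^sup>+ y. ennreal (exp (a x * y)) \<partial>std_normal)"
    by (rule product_nn_integral_prod[OF assms, where f = "\<lambda>x y. ennreal (exp (a x * y))"]) auto
  also have "\<dots> = ennreal (exp ((\<Sum>x\<in>I. (a x)\<^sup>2) / 2))"
    using assms by (simp add: std_normal_mgf prod_ennreal exp_sum sum_divide_distrib)
  finally show ?thesis .
qed

lemma PiM_std_normal_linear_tail:
  assumes "finite I" and "\<tau> \<ge> 0"
  shows "measure (PiM I (\<lambda>_. std_normal))
      {g \<in> space (PiM I (\<lambda>_. std_normal)). \<tau> * sqrt (\<Sum>x\<in>I. (a x)\<^sup>2) < (\<Sum>x\<in>I. a x * g x)}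
    \<le> exp (- \<tau>\<^sup>2 / 2)"
proof -
  let ?M = "PiM I (\<lambda>_. std_normal)"
  interpret prob_space ?M by (rule prob_space_PiM_std_normal)
  define s where "s = sqrt (\<Sum>x\<in>I. (a x)\<^sup>2)"
  let ?A = "{g \<in> space ?M. \<tau> * s < (\<Sum>x\<in>I. a x * g x)}"
  consider "\<tau> = 0" | "s = 0" | "\<tau> > 0" "s > 0"
    using \<open>\<tau> \<ge> 0\<close> unfolding s_def by (metis less_eq_real_def real_sqrt_ge_zero sum_nonneg zero_le_power2)
  then show ?thesis
  proof cases
    case 1
    then show ?thesis by (simp add: s_def[symmetric])
  next
    case 2
    then have "\<forall>x\<in>I. a x = 0"
      unfolding s_def using assms(1) by (simp add: sum_nonneg_eq_0_iff)
    with 2 show ?thesis by (simp add: s_def[symmetric])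
  next
    case 3
    define t where "t = \<tau> / s"
    have "t > 0" using 3 unfolding t_def by simp
    have "emeasure ?M ?A \<le> emeasure ?M {g \<in> space ?M. \<tau> * s \<le> (\<Sum>x\<in>I. a x * g x)}"
      by (intro emeasure_mono) auto
    also have "\<dots> \<le> ennreal (exp (- t * (\<tau> * s)))
        * (\<integral>\<^sup>+ g. ennreal (exp (t * (\<Sum>x\<in>I. a x * g x))) * indicator (space ?M) g \<partial>?M)"
      using \<open>t > 0\<close> by (intro Chernoff_ineq_nn_integral_ge) auto
    also have "(\<integral>\<^sup>+ g. ennreal (exp (t * (\<Sum>x\<in>I. a x * g x))) * indicator (space ?M) g \<partial>?M)
        = (\<integral>\<^sup>+ g. ennreal (exp (\<Sum>x\<in>I. (t * a x) * g x)) \<partial>?M)"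
      by (intro nn_integral_cong) (simp add: sum_distrib_left mult_ac)
    also have "\<dots> = ennreal (exp ((\<Sum>x\<in>I. (t * a x)\<^sup>2) / 2))"
      by (rule PiM_std_normal_mgf[OF assms(1)])
    also have "(\<Sum>x\<in>I. (t * a x)\<^sup>2) = t\<^sup>2 * s\<^sup>2"
      unfolding s_def by (simp add: power_mult_distrib sum_distrib_left sum_nonneg)
    also have "ennreal (exp (- t * (\<tau> * s))) * ennreal (exp (t\<^sup>2 * s\<^sup>2 / 2)) = ennreal (exp (- \<tau>\<^sup>2 / 2))"
    proof -
      have "- t * (\<tau> * s) + t\<^sup>2 * s\<^sup>2 / 2 = - \<tau>\<^sup>2 / 2"
        unfolding t_def using 3 by (simp add: power2_eq_square field_simps)
      then show ?thesis by (simp add: ennreal_mult'[symmetric] exp_add[symmetric])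
    qed
    finally show ?thesis
      unfolding s_def emeasure_eq_measure by simp
  qed
qed

section \<open>Operator norms at initialization\<close>

lemma finite_init_index: "finite (init_index L n m)"
proof (rule finite_subset)
  show "init_index L n m \<subseteq> UNIV \<times> {1..L} \<times> {..<m} \<times> {..<n + m}"
    unfolding init_index_def by auto
qed simp

lemma sum_init_index_W2_layer:
  assumes "k \<in> {1..L}"
    and "\<And>x. x \<in> init_index L n m \<Longrightarrow> f x \<noteq> 0 \<Longrightarrow> \<exists>i j. i < m \<and> j < m \<and> x = (False, k, i, j)"
  shows "(\<Sum>x\<in>init_index L n m. f x) = (\<Sum>i<m. \<Sum>j<m. f (False, k, i, j))"
proof -
  let ?J = "(\<lambda>(i, j). (False, k, i, j)) ` ({..<m} \<times> {..<m})"
  have "?J \<subseteq> init_index L n m"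
    using assms(1) unfolding init_index_def by auto
  moreover have "\<forall>x \<in> init_index L n m - ?J. f x = 0"
    using assms(2) by fastforce
  ultimately have "(\<Sum>x\<in>init_index L n m. f x) = (\<Sum>x\<in>?J. f x)"
    by (intro sum.mono_neutral_right finite_init_index)
  also have "\<dots> = (\<Sum>(i, j)\<in>{..<m} \<times> {..<m}. f (False, k, i, j))"
    by (subst sum.reindex) (auto simp: inj_on_def case_prod_beta)
  also have "\<dots> = (\<Sum>i<m. \<Sum>j<m. f (False, k, i, j))"
    by (simp add: sum.cartesian_product)
  finally show ?thesis .
qed

definition bilinear_coeff :: "nat \<Rightarrow> nat \<Rightarrow> (nat \<Rightarrow> real) \<Rightarrow> (nat \<Rightarrow> real) \<Rightarrow> bool \<times> nat \<times> nat \<times> nat \<Rightarrow> real" where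
  "bilinear_coeff m k u v x =
     (case x of (b, k', i, j) \<Rightarrow> if \<not> b \<and> k' = k \<and> i < m \<and> j < m then u i * v j else 0)"

lemma sum_bilinear_coeff:
  assumes "k \<in> {1..L}"
  shows "(\<Sum>x\<in>init_index L n m. bilinear_coeff m k u v x * g x) = bilinear_form m (W2_of g k) u v"
proof -
  have "(\<Sum>x\<in>init_index L n m. bilinear_coeff m k u v x * g x)
      = (\<Sum>i<m. \<Sum>j<m. u i * v j * g (False, k, i, j))"
    using assms by (subst sum_init_index_W2_layer) (auto simp: bilinear_coeff_def split: if_splits)
  then show ?thesis
    unfolding bilinear_form_def mat_vec_def W2_of_def by (simp add: sum_distrib_left mult_ac)
qed

lemma L2_bilinear_coeff:
  assumes "k \<in> {1..L}"
  shows "sqrt (\<Sum>x\<in>init_index L n m. (bilinear_coeff m k u v x)\<^sup>2) = L2_set u {..<m} * L2_set v {..<m}"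
proof -
  have "(\<Sum>x\<in>init_index L n m. (bilinear_coeff m k u v x)\<^sup>2) = (\<Sum>i<m. \<Sum>j<m. (u i)\<^sup>2 * (v j)\<^sup>2)"
    using assms by (subst sum_init_index_W2_layer)
      (auto simp: bilinear_coeff_def power_mult_distrib split: if_splits)
  also have "\<dots> = (\<Sum>i<m. (u i)\<^sup>2) * (\<Sum>j<m. (v j)\<^sup>2)"
    by (simp add: sum_product)
  finally show ?thesis unfolding L2_set_def by (simp add: real_sqrt_mult)
qed

text \<open>The deviation level chosen so that \<open>exp (- r\<^sup>2 / 2)\<close> beats the \<open>(8 m + 3)\<^sup>2\<^sup>m\<close> pairs of net points
  by the factor \<open>exp (- m)\<close>.\<close>
definition net_deviation :: "nat \<Rightarrow> real" where
  "net_deviation m = sqrt (4 * real m * ln (8 * real m + 3) + 2 * real m)"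

lemma net_deviation_nonneg: "net_deviation m \<ge> 0"
  unfolding net_deviation_def by simp

lemma net_union_bound:
  "real (card ({1..L} \<times> net_grid m \<times> net_grid m)) * exp (- (net_deviation m)\<^sup>2 / 2)
     \<le> real L * exp (- real m)"
proof -
  define X where "X = 8 * real m + 3"
  have "X > 0" unfolding X_def by simp
  have "card ({1..L} \<times> net_grid m \<times> net_grid m) \<le> L * ((8 * m + 3) ^ m * (8 * m + 3) ^ m)"
    using card_net_grid_le[of m] by (simp add: card_cartesian_product mult_le_mono)
  then have "real (card ({1..L} \<times> net_grid m \<times> net_grid m))
      \<le> real (L * ((8 * m + 3) ^ m * (8 * m + 3) ^ m))"
    by (simp only: of_nat_le_iff)
  also have "\<dots> = real L * X ^ (2 * m)"
    unfolding X_def by (simp add: mult_2 power_add)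
  finally have card: "real (card ({1..L} \<times> net_grid m \<times> net_grid m)) \<le> real L * X ^ (2 * m)" .
  have "- (net_deviation m)\<^sup>2 / 2 = - real m - real (2 * m) * ln X"
    unfolding net_deviation_def X_def by simp
  moreover have "exp (real (2 * m) * ln X) = X ^ (2 * m)"
    using \<open>X > 0\<close> exp_of_nat_mult[of "2 * m" "ln X"] by simp
  ultimately have "exp (- (net_deviation m)\<^sup>2 / 2) = exp (- real m) / X ^ (2 * m)"
    by (simp add: exp_diff)
  then have "real (card ({1..L} \<times> net_grid m \<times> net_grid m)) * exp (- (net_deviation m)\<^sup>2 / 2)
      \<le> real L * X ^ (2 * m) * (exp (- real m) / X ^ (2 * m))"
    using card by (simp only:) (intro mult_right_mono, auto)
  with \<open>X > 0\<close> show ?thesis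
    by simp
qed

lemma init_W2_op_norm_event:
  assumes "m > 0"
  shows "\<exists>E \<in> sets (init_measure L n m). measure (init_measure L n m) E \<ge> 1 - real L * exp (- real m) \<and>
    E \<subseteq> {g. \<forall>k\<in>{1..L}. op_norm_le m (W2_of g k) (4 * net_deviation m)}"
proof -
  let ?I = "init_index L n m" and ?M = "init_measure L n m"
  interpret prob_space ?M
    unfolding init_measure_def by (rule prob_space_PiM_std_normal)
  define r where "r = net_deviation m"
  define P where "P = {1..L} \<times> net_grid m \<times> net_grid m"
  define Bad where "Bad = (\<lambda>(k, u, v). {g \<in> space ?M.
    r * sqrt (\<Sum>x\<in>?I. (bilinear_coeff m k u v x)\<^sup>2) < (\<Sum>x\<in>?I. bilinear_coeff m k u v x * g x)})"
  define E where "E = space ?M - (\<Union>p\<in>P. Bad p)"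
  have "finite P"
    unfolding P_def using finite_net_grid by simp
  have Bad_sets: "Bad p \<in> sets ?M" for p
    unfolding Bad_def init_measure_def by (cases p) (simp, measurable)
  have Bad_measure: "measure ?M (Bad p) \<le> exp (- r\<^sup>2 / 2)" for p
  proof -
    obtain k u v where p: "p = (k, u, v)" by (cases p)
    show ?thesis
      unfolding p Bad_def init_measure_def r_def prod.case
      by (intro PiM_std_normal_linear_tail finite_init_index net_deviation_nonneg)
  qed
  have "measure ?M (\<Union>p\<in>P. Bad p) \<le> (\<Sum>p\<in>P. measure ?M (Bad p))"
    by (rule measure_UNION_le[OF \<open>finite P\<close> Bad_sets])
  also have "\<dots> \<le> real (card P) * exp (- r\<^sup>2 / 2)"
    by (intro sum_bounded_above Bad_measure)
  also have "\<dots> \<le> real L * exp (- real m)"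
    unfolding P_def r_def by (rule net_union_bound)
  moreover have "(\<Union>p\<in>P. Bad p) \<in> sets ?M"
    using \<open>finite P\<close> Bad_sets by auto
  ultimately have "measure ?M E \<ge> 1 - real L * exp (- real m)"
    unfolding E_def by (simp add: prob_compl)
  moreover have "E \<subseteq> {g. \<forall>k\<in>{1..L}. op_norm_le m (W2_of g k) (4 * r)}"
  proof (intro subsetI CollectI ballI op_norm_le_of_net[OF \<open>m > 0\<close>])
    fix g k u v
    assume "g \<in> E" "k \<in> {1..L}" "u \<in> net_grid m" "v \<in> net_grid m"
    then have "g \<notin> Bad (k, u, v)" "g \<in> space ?M"
      unfolding E_def P_def by auto
    then show "bilinear_form m (W2_of g k) u v \<le> r * L2_set u {..<m} * L2_set v {..<m}"
      unfolding Bad_def using \<open>k \<in> {1..L}\<close> by (simp add: sum_bilinear_coeff L2_bilinear_coeff mult.assoc)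
  qed (simp add: r_def net_deviation_nonneg)
  moreover have "E \<in> sets ?M"
    unfolding E_def using \<open>(\<Union>p\<in>P. Bad p) \<in> sets ?M\<close> by auto
  ultimately show ?thesis
    unfolding r_def by blast
qed

lemma one_le_ln_nat: "m \<ge> 3 \<Longrightarrow> 1 \<le> ln (real m)"
  using exp_le ln_ge_iff[of "real m" 1] by simp

lemma net_deviation_le_log:
  assumes "m \<ge> 3"
  shows "net_deviation m / sqrt (real m) \<le> 14 * ln (real m)"
proof -
  have "real m \<ge> 3" using assms by simp
  have "8 * real m + 3 \<le> real m ^ 3"
  proof -
    have "3 * 3 * real m \<le> real m * real m * real m"
      using \<open>real m \<ge> 3\<close> by (intro mult_right_mono mult_mono) auto
    then show ?thesis
      unfolding power3_eq_cube using \<open>real m \<ge> 3\<close> by linarith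
  qed
  then have "ln (8 * real m + 3) \<le> ln (real m ^ 3)"
    using assms by (subst ln_le_cancel_iff) auto
  also have "\<dots> = 3 * ln (real m)"
    using assms by (simp add: ln_realpow)
  finally have "ln (8 * real m + 3) \<le> 3 * ln (real m)" .
  then have "sqrt (4 * ln (8 * real m + 3) + 2) \<le> sqrt (14 * ln (real m))"
    using one_le_ln_nat[OF assms] by (intro real_sqrt_le_mono) linarith
  also have "\<dots> \<le> 14 * ln (real m)"
    using one_le_ln_nat[OF assms] by (intro real_sqrt_le_iff'[THEN iffD2]) (auto simp: power2_eq_square)
  finally have "sqrt (4 * ln (8 * real m + 3) + 2) \<le> 14 * ln (real m)" .
  moreover have "net_deviation m = sqrt (real m) * sqrt (4 * ln (8 * real m + 3) + 2)"
    unfolding net_deviation_def by (simp flip: real_sqrt_mult add: algebra_simps)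
  ultimately show ?thesis
    using assms by simp
qed

lemma frobenius_norm_layer_le_dist_W2:
  assumes "k \<in> {1..L}"
  shows "frobenius_norm m (\<lambda>i j. W2 k i j - G k i j) \<le> dist_W2 L m W2 G"
  unfolding frobenius_norm_def dist_W2_def
  using assms by (intro real_sqrt_le_mono member_le_sum) (auto intro!: sum_nonneg)

lemma lista_b_dist_le:
  assumes "lam \<ge> 0" and "B \<ge> 0" and "s < m" and "l \<le> L"
    and "\<And>k. k \<in> {l+1..L} \<Longrightarrow> op_norm_le m (W2 k) B"
    and "\<And>k. k \<in> {l+1..L} \<Longrightarrow> op_norm_le m (W2' k) B"
  shows "vec_dist m (lista_b lam n m L W1 W2 y x0 l s) (lista_b lam n m L W1' W2' y x0 l s)
    \<le> 2 * ((B / sqrt (real m)) ^ (L - l) / sqrt (real m))"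
proof -
  have "L2_set (lista_b lam n m L W1 W2 y x0 l s) {..<m} \<le> (B / sqrt (real m)) ^ (L - l) / sqrt (real m)"
    and "L2_set (lista_b lam n m L W1' W2' y x0 l s) {..<m} \<le> (B / sqrt (real m)) ^ (L - l) / sqrt (real m)"
    using assms by (intro L2_set_lista_b_le; simp)+
  then show ?thesis
    using vec_dist_le_L2_set_add[of m "lista_b lam n m L W1 W2 y x0 l s" "lista_b lam n m L W1' W2' y x0 l s"]
    by linarith
qed

lemma perturbed_op_norm_le_log:
  assumes "m \<ge> 3" and "R \<ge> 0"
  shows "(4 * net_deviation m + R) / sqrt (real m) \<le> (56 + R) * ln (real m)"
proof -
  have "sqrt (real m) \<ge> 1" and "ln (real m) \<ge> 1"
    using assms(1) one_le_ln_nat by auto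
  then have "R / sqrt (real m) \<le> R * 1" and "R * 1 \<le> R * ln (real m)"
    using \<open>R \<ge> 0\<close> by (simp_all add: divide_le_eq mult_left_mono mult_le_cancel_left1)
  moreover have "(4 * net_deviation m + R) / sqrt (real m) = 4 * (net_deviation m / sqrt (real m)) + R / sqrt (real m)"
    by (simp add: add_divide_distrib)
  ultimately show ?thesis
    using net_deviation_le_log[OF assms(1)] unfolding distrib_right by linarith
qed

lemma lista_b_dist_le_polylog:
  assumes "lam \<ge> 0" and "m \<ge> 3" and "s < m" and "l \<le> L"
    and op: "\<And>k. k \<in> {1..L} \<Longrightarrow> op_norm_le m (G k) (4 * net_deviation m)"
    and dist: "dist_W2 L m W2 G \<le> R"
  shows "vec_dist m (lista_b lam n m L W1 W2 y x0 l s) (lista_b lam n m L W1' G y x0 l s)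
    \<le> 2 * (56 + R) ^ L * ln (real m) ^ L / sqrt (real m)"
proof -
  define B where "B = 4 * net_deviation m + R"
  have "dist_W2 L m W2 G \<ge> 0"
    unfolding dist_W2_def by (simp add: sum_nonneg)
  with dist have "R \<ge> 0" by linarith
  then have "B \<ge> 0"
    unfolding B_def using net_deviation_nonneg by simp
  have "op_norm_le m (W2 k) B" if "k \<in> {1..L}" for k
    unfolding B_def using op[OF that] order_trans[OF frobenius_norm_layer_le_dist_W2[OF that] dist]
    by (rule op_norm_le_perturb)
  moreover have "op_norm_le m (G k) B" if "k \<in> {1..L}" for k
    using op_norm_le_mono[OF op[OF that]] \<open>R \<ge> 0\<close> unfolding B_def by simp
  ultimately have "vec_dist m (lista_b lam n m L W1 W2 y x0 l s) (lista_b lam n m L W1' G y x0 l s)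
      \<le> 2 * ((B / sqrt (real m)) ^ (L - l) / sqrt (real m))"
    using assms by (intro lista_b_dist_le \<open>B \<ge> 0\<close>) auto
  also have "(B / sqrt (real m)) ^ (L - l) \<le> ((56 + R) * ln (real m)) ^ L"
  proof (rule order_trans[OF power_mono power_increasing])
    show "B / sqrt (real m) \<le> (56 + R) * ln (real m)"
      unfolding B_def using assms(2) \<open>R \<ge> 0\<close> by (rule perturbed_op_norm_le_log)
    have "1 * 1 \<le> (56 + R) * ln (real m)"
      using one_le_ln_nat[OF assms(2)] \<open>R \<ge> 0\<close> by (intro mult_mono) auto
    then show "1 \<le> (56 + R) * ln (real m)" by simp
  qed (use \<open>B \<ge> 0\<close> in auto)
  finally show ?thesis
    by (simp add: power_mult_distrib divide_right_mono)
qed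

lemma lista_b_dist_event:
  assumes "lam \<ge> 0" and "m \<ge> 3"
  shows "\<exists>E \<in> sets (init_measure L n m). measure (init_measure L n m) E \<ge> 1 - real L * exp (- real m) \<and>
    E \<subseteq> {g. \<forall>W1 W2. dist_W2 L m W2 (W2_of g) \<le> R \<longrightarrow> (\<forall>s<m. \<forall>l\<le>L.
      vec_dist m (lista_b lam n m L W1 W2 y x0 l s) (lista_b lam n m L (W1_of g) (W2_of g) y x0 l s)
        \<le> 2 * (56 + \<bar>R\<bar>) ^ L * ln (real m) ^ L / sqrt (real m))}"
proof -
  obtain E where "E \<in> sets (init_measure L n m)"
    and "measure (init_measure L n m) E \<ge> 1 - real L * exp (- real m)"
    and E_op: "E \<subseteq> {g. \<forall>k\<in>{1..L}. op_norm_le m (W2_of g k) (4 * net_deviation m)}"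
    using init_W2_op_norm_event[of m L n] assms(2) by auto
  moreover have "E \<subseteq> {g. \<forall>W1 W2. dist_W2 L m W2 (W2_of g) \<le> R \<longrightarrow> (\<forall>s<m. \<forall>l\<le>L.
      vec_dist m (lista_b lam n m L W1 W2 y x0 l s) (lista_b lam n m L (W1_of g) (W2_of g) y x0 l s)
        \<le> 2 * (56 + \<bar>R\<bar>) ^ L * ln (real m) ^ L / sqrt (real m))}"
  proof (intro subsetI CollectI allI impI)
    fix g W1 W2 s l
    assume "g \<in> E" "dist_W2 L m W2 (W2_of g) \<le> R" "s < m" "l \<le> L"
    then show "vec_dist m (lista_b lam n m L W1 W2 y x0 l s) (lista_b lam n m L (W1_of g) (W2_of g) y x0 l s)
        \<le> 2 * (56 + \<bar>R\<bar>) ^ L * ln (real m) ^ L / sqrt (real m)"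
      using E_op assms by (intro lista_b_dist_le_polylog order_trans[OF _ abs_ge_self]) auto
  qed
  ultimately show ?thesis by blast
qed

theorem lemma8:
  fixes L n :: nat and lam Cy Cx R1 R2 :: real
  assumes "lam > 0"
  shows "\<exists>(C::real) (k::nat) (\<delta>::nat \<Rightarrow> real) (M0::nat). \<delta> \<longlonglongrightarrow> 0 \<and>
    (\<forall>m \<ge> M0. \<forall>(y::nat \<Rightarrow> real) (x0::nat \<Rightarrow> real).
      (\<forall>i<n. \<bar>y i\<bar> \<le> Cy) \<longrightarrow> (\<forall>i<m. \<bar>x0 i\<bar> \<le> Cx) \<longrightarrow>
      (\<exists>E \<in> sets (init_measure L n m).
         measure (init_measure L n m) E \<ge> 1 - \<delta> m \<and>
         E \<subseteq> {g. \<forall>W1 W2. dist_W1 L n m W1 (W1_of g) \<le> R1 \<longrightarrow> dist_W2 L m W2 (W2_of g) \<le> R2 \<longrightarrow>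
               (\<forall>s<m. \<forall>l\<in>{1..L-1}.
                  vec_dist m (lista_b lam n m L W1 W2 y x0 l s)
                             (lista_b lam n m L (W1_of g) (W2_of g) y x0 l s)
                  \<le> C * (ln (real m)) ^ k / sqrt (real m))}))"
proof -
  define \<delta> where "\<delta> = (\<lambda>m. real L * inverse (real (Suc m)))"
  have lim: "\<delta> \<longlonglongrightarrow> 0"
    unfolding \<delta>_def by (rule tendsto_mult_right_zero[OF LIMSEQ_inverse_real_of_nat])
  have exp_le_\<delta>: "real L * exp (- real m) \<le> \<delta> m" for m
    using exp_ge_add_one_self[of "real m"]
    unfolding \<delta>_def by (intro mult_left_mono) (simp_all add: exp_minus le_imp_inverse_le)
  have bound: "\<exists>E \<in> sets (init_measure L n m).
         measure (init_measure L n m) E \<ge> 1 - \<delta> m \<and>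
         E \<subseteq> {g. \<forall>W1 W2. dist_W1 L n m W1 (W1_of g) \<le> R1 \<longrightarrow> dist_W2 L m W2 (W2_of g) \<le> R2 \<longrightarrow>
               (\<forall>s<m. \<forall>l\<in>{1..L-1}.
                  vec_dist m (lista_b lam n m L W1 W2 y x0 l s)
                             (lista_b lam n m L (W1_of g) (W2_of g) y x0 l s)
                  \<le> 2 * (56 + \<bar>R2\<bar>) ^ L * (ln (real m)) ^ L / sqrt (real m))}"
    if m3: "m \<ge> 3" for m y x0
  proof -
    obtain E where "E \<in> sets (init_measure L n m)"
      and E_measure: "measure (init_measure L n m) E \<ge> 1 - real L * exp (- real m)"
      and E_sub: "E \<subseteq> {g. \<forall>W1 W2. dist_W2 L m W2 (W2_of g) \<le> R2 \<longrightarrow> (\<forall>s<m. \<forall>l\<le>L.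
        vec_dist m (lista_b lam n m L W1 W2 y x0 l s) (lista_b lam n m L (W1_of g) (W2_of g) y x0 l s)
          \<le> 2 * (56 + \<bar>R2\<bar>) ^ L * ln (real m) ^ L / sqrt (real m))}"
      using lista_b_dist_event[of lam m L n R2 y x0] assms m3 by auto
    moreover have "E \<subseteq> {g. \<forall>W1 W2. dist_W1 L n m W1 (W1_of g) \<le> R1 \<longrightarrow> dist_W2 L m W2 (W2_of g) \<le> R2 \<longrightarrow>
        (\<forall>s<m. \<forall>l\<in>{1..L-1}.
          vec_dist m (lista_b lam n m L W1 W2 y x0 l s) (lista_b lam n m L (W1_of g) (W2_of g) y x0 l s)
          \<le> 2 * (56 + \<bar>R2\<bar>) ^ L * (ln (real m)) ^ L / sqrt (real m))}"
    proof (intro subsetI CollectI allI impI ballI)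
      fix g W1 W2 s l
      assume "g \<in> E" "dist_W2 L m W2 (W2_of g) \<le> R2" "s < m" "l \<in> {1..L-1}"
      moreover have "l \<le> L" using \<open>l \<in> {1..L-1}\<close> by auto
      ultimately show "vec_dist m (lista_b lam n m L W1 W2 y x0 l s)
          (lista_b lam n m L (W1_of g) (W2_of g) y x0 l s)
          \<le> 2 * (56 + \<bar>R2\<bar>) ^ L * (ln (real m)) ^ L / sqrt (real m)"
        using E_sub by blast
    qed
    moreover have "measure (init_measure L n m) E \<ge> 1 - \<delta> m"
      using E_measure exp_le_\<delta>[of m] by linarith
    ultimately show ?thesis
      by blast
  qed
  show ?thesis
    by (intro exI[of _ "2 * (56 + \<bar>R2\<bar>) ^ L"] exI[of _ L] exI[of _ \<delta>] exI[of _ "3::nat"]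
        conjI allI impI lim) (rule bound)
qed

end
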